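(* Let $(X,d)$ be a compact metric space, $f_{0,\infty}=\{f_n\}_{n=0}^\infty$ a sequence of continuous self-maps of $X$, and $A\in\mathcal{S}$. For $k\ge1$ let $f^{(k)}_{0,\infty}=\{f_n\times\cdots\times f_n\ (k\text{ factors})\}_{n=0}^\infty$ acting on $X^k$ with the metric $d_k((x_i),(y_i))=\max_{1\le i\le k}d(x_i,y_i)$. Then \[h_A(f_{0,\infty}^{(k)})=k\,h_A(f_{0,\infty}),\quad k\geq1.\]
   Context: For a sequence $\{f_n\}$ of continuous self-maps of a compact metric space: $f_i^n=f_{i+n-1}\circ\cdots\circ f_i$, $f_i^0=\mathrm{id}$, $f_i^{-n}(B)=(f_i^n)^{-1}(B)$. $\mathcal S$ is the set of strictly increasing sequences $A=\{a_i\}_{i\ge1}$ of nonnegative integers. The topological sequence entropy along $A$ is $h_A(f_{0,\infty})=\sup_{\mathscr A}\limsup_{n\to\infty}\frac1n\log\mathcal N(\bigvee_{i=1}^n f_0^{-a_i}\mathscr A)$ over finite open covers $\mathscr A$, where $\bigvee$ is the common refinement $\{\bigcap_i U_i\}$, $f_0^{-a}\mathscr A=\{f_0^{-a}U:U\in\mathscr A\}$ and $\mathcal N$ the minimal cardinality of a subcover; values lie in $[0,\infty]$. *)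

theory Defs
  imports "HOL-Analysis.Analysis"
begin

fun nacomp :: "(nat \<Rightarrow> 'a \<Rightarrow> 'a) \<Rightarrow> nat \<Rightarrow> nat \<Rightarrow> 'a \<Rightarrow> 'a" where
  "nacomp f i 0 = id"
| "nacomp f i (Suc n) = f (i + n) \<circ> nacomp f i n"

definition finite_open_covers :: "'a topology \<Rightarrow> 'a set set set" where
  "finite_open_covers T =
     {C. finite C \<and> (\<forall>U\<in>C. openin T U) \<and> \<Union>C = topspace T}"

definition cover_preimage ::
  "'a topology \<Rightarrow> (nat \<Rightarrow> 'a \<Rightarrow> 'a) \<Rightarrow> nat \<Rightarrow> 'a set set \<Rightarrow> 'a set set" where
  "cover_preimage T f a C = (\<lambda>U. {x \<in> topspace T. nacomp f 0 a x \<in> U}) ` C"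

definition cover_join :: "'a topology \<Rightarrow> (nat \<Rightarrow> 'a set set) \<Rightarrow> nat \<Rightarrow> 'a set set" where
  "cover_join T C n =
     {topspace T \<inter> (\<Inter>i\<in>{1..n}. U i) | U. \<forall>i\<in>{1..n}. U i \<in> C i}"

definition min_subcover :: "'a topology \<Rightarrow> 'a set set \<Rightarrow> nat" where
  "min_subcover T C =
     (LEAST m. \<exists>S. S \<subseteq> C \<and> finite S \<and> card S = m \<and> topspace T \<subseteq> \<Union>S)"

text \<open>Topological sequence entropy along A = {a_i}_{i>=1}.\<close>
definition seq_entropy ::
  "'a topology \<Rightarrow> (nat \<Rightarrow> 'a \<Rightarrow> 'a) \<Rightarrow> (nat \<Rightarrow> nat) \<Rightarrow> ereal" where
  "seq_entropy T f a =
     (SUP C \<in> finite_open_covers T.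
        limsup (\<lambda>n. ereal (ln (real (min_subcover T
             (cover_join T (\<lambda>i. cover_preimage T f (a i) C) n))) / real n)))"

text \<open>The k-fold product system f_n x ... x f_n on X^k, points of X^k being
  extensional functions on {..<k}.\<close>
definition prod_maps :: "nat \<Rightarrow> (nat \<Rightarrow> 'a \<Rightarrow> 'a) \<Rightarrow> nat \<Rightarrow> (nat \<Rightarrow> 'a) \<Rightarrow> (nat \<Rightarrow> 'a)" where
  "prod_maps k f n x = restrict (\<lambda>i. f n (x i)) {..<k}"

end

theory Submission
  imports Defs
begin

(* Both inequalities come from comparisons of cover numbers that are uniform in n.
   Upper bound: by a Lebesgue number argument on the compact product, every open cover W of
   X^k is refined by the boxes U_1 x ... x U_k of some open cover C of X; a box of members of
   the join of C along A is a member of the join of this box cover, hence lies in a member of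
   the join of W, so N(W, n) <= N(C, n)^k.
   Lower bound: if delta is a Lebesgue number of C, a maximal (n, delta)-separated set E along A
   is spanning, so N(C, n) <= |E|; and for a cover C' of mesh < delta each member of the join of
   the box cover of C' contains at most one point of E^k, so |E|^k <= N(box cover, n). *)

lemma min_subcover_le_card:
  assumes "S \<subseteq> D" "finite S" "topspace T \<subseteq> \<Union>S"
  shows "min_subcover T D \<le> card S"
  unfolding min_subcover_def by (rule Least_le) (use assms in blast)

lemma obtain_min_subcover:
  assumes "S \<subseteq> D" "finite S" "topspace T \<subseteq> \<Union>S"
  obtains S' where "S' \<subseteq> D" "finite S'" "card S' = min_subcover T D" "topspace T \<subseteq> \<Union>S'"
  using LeastI_ex[of "\<lambda>m. \<exists>S. S \<subseteq> D \<and> finite S \<and> card S = m \<and> topspace T \<subseteq> \<Union>S"] assms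
  unfolding min_subcover_def by blast

lemma min_subcover_le_refining:
  assumes "finite F" "topspace T \<subseteq> \<Union>F" "\<And>P. P \<in> F \<Longrightarrow> \<exists>Q\<in>D. P \<subseteq> Q"
  shows "min_subcover T D \<le> card F"
proof -
  obtain h where h: "\<And>P. P \<in> F \<Longrightarrow> h P \<in> D \<and> P \<subseteq> h P"
    using assms(3) by metis
  have "h ` F \<subseteq> D" "finite (h ` F)" "topspace T \<subseteq> \<Union>(h ` F)"
    using assms h by blast+
  then have "min_subcover T D \<le> card (h ` F)"
    by (rule min_subcover_le_card)
  also have "\<dots> \<le> card F"
    using assms(1) by (rule card_image_le)
  finally show ?thesis .
qed

lemma card_le_min_subcover:
  assumes "S \<subseteq> D" "finite S" "topspace T \<subseteq> \<Union>S" "E \<subseteq> topspace T"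
    and unique: "\<And>P x y. P \<in> D \<Longrightarrow> x \<in> E \<Longrightarrow> y \<in> E \<Longrightarrow> x \<in> P \<Longrightarrow> y \<in> P \<Longrightarrow> x = y"
  shows "card E \<le> min_subcover T D"
proof -
  obtain S' where S': "S' \<subseteq> D" "finite S'" "card S' = min_subcover T D" "topspace T \<subseteq> \<Union>S'"
    using obtain_min_subcover[OF assms(1-3)] .
  have "\<forall>x\<in>E. \<exists>P\<in>S'. x \<in> P"
    using S'(4) assms(4) by blast
  then obtain h where h: "\<forall>x\<in>E. h x \<in> S' \<and> x \<in> h x"
    by metis
  have "inj_on h E"
  proof (rule inj_onI)
    fix x y assume "x \<in> E" "y \<in> E" "h x = h y"
    then show "x = y"
      using h S'(1) unique[of "h x" x y] by auto
  qed
  then have "card E \<le> card S'"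
    using h S'(2) by (intro card_inj_on_le) auto
  with S'(3) show ?thesis by simp
qed

section \<open>Members of the join along a sequence\<close>

definition orbit_cell ::
  "'a topology \<Rightarrow> (nat \<Rightarrow> 'a \<Rightarrow> 'a) \<Rightarrow> (nat \<Rightarrow> nat) \<Rightarrow> nat \<Rightarrow> (nat \<Rightarrow> 'a set) \<Rightarrow> 'a set" where
  "orbit_cell T g a n U = {x \<in> topspace T. \<forall>i\<in>{1..n}. nacomp g 0 (a i) x \<in> U i}"

lemma orbit_cell_restrict [simp]: "orbit_cell T g a n (restrict U {1..n}) = orbit_cell T g a n U"
  by (simp add: orbit_cell_def)

lemma orbit_cell_mono:
  "(\<And>i. i \<in> {1..n} \<Longrightarrow> U i \<subseteq> V i) \<Longrightarrow> orbit_cell T g a n U \<subseteq> orbit_cell T g a n V"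
  unfolding orbit_cell_def by blast

lemma cover_join_preimage_eq:
  "cover_join T (\<lambda>i. cover_preimage T g (a i) C) n = orbit_cell T g a n ` PiE {1..n} (\<lambda>_. C)"
proof (intro equalityI subsetI)
  fix P assume "P \<in> cover_join T (\<lambda>i. cover_preimage T g (a i) C) n"
  then obtain V where P: "P = topspace T \<inter> (\<Inter>i\<in>{1..n}. V i)"
    and V: "\<forall>i\<in>{1..n}. V i \<in> cover_preimage T g (a i) C"
    unfolding cover_join_def by blast
  have "\<forall>i\<in>{1..n}. \<exists>U\<in>C. V i = {x \<in> topspace T. nacomp g 0 (a i) x \<in> U}"
    using V unfolding cover_preimage_def by blast
  then obtain U where U: "\<forall>i\<in>{1..n}. U i \<in> C \<and> V i = {x \<in> topspace T. nacomp g 0 (a i) x \<in> U i}"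
    by metis
  then have "P = orbit_cell T g a n U"
    unfolding P orbit_cell_def by blast
  moreover have "restrict U {1..n} \<in> PiE {1..n} (\<lambda>_. C)"
    using U by simp
  ultimately show "P \<in> orbit_cell T g a n ` PiE {1..n} (\<lambda>_. C)"
    by (metis image_eqI orbit_cell_restrict)
next
  fix P assume "P \<in> orbit_cell T g a n ` PiE {1..n} (\<lambda>_. C)"
  then obtain U where U: "U \<in> PiE {1..n} (\<lambda>_. C)" "P = orbit_cell T g a n U"
    by blast
  let ?V = "\<lambda>i. {x \<in> topspace T. nacomp g 0 (a i) x \<in> U i}"
  have "P = topspace T \<inter> (\<Inter>i\<in>{1..n}. ?V i)"
    unfolding U(2) orbit_cell_def by blast
  moreover have "\<forall>i\<in>{1..n}. ?V i \<in> cover_preimage T g (a i) C"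
    using U(1) unfolding cover_preimage_def by blast
  ultimately show "P \<in> cover_join T (\<lambda>i. cover_preimage T g (a i) C) n"
    unfolding cover_join_def by blast
qed

definition orbit_cover_number ::
  "'a topology \<Rightarrow> (nat \<Rightarrow> 'a \<Rightarrow> 'a) \<Rightarrow> (nat \<Rightarrow> nat) \<Rightarrow> 'a set set \<Rightarrow> nat \<Rightarrow> nat" where
  "orbit_cover_number T g a C n = min_subcover T (orbit_cell T g a n ` PiE {1..n} (\<lambda>_. C))"

lemma seq_entropy_orbit_cover_number:
  "seq_entropy T g a = (SUP C \<in> finite_open_covers T.
     limsup (\<lambda>n. ereal (ln (real (orbit_cover_number T g a C n)) / real n)))"
  by (simp add: seq_entropy_def orbit_cover_number_def cover_join_preimage_eq)

lemma nacomp_in_topspace: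
  assumes "\<And>m. g m ` topspace T \<subseteq> topspace T" "x \<in> topspace T"
  shows "nacomp g i m x \<in> topspace T"
  using assms by (induction m) auto

lemma orbit_cells_cover:
  assumes "\<And>m. g m ` topspace T \<subseteq> topspace T" "topspace T \<subseteq> \<Union>C"
  shows "topspace T \<subseteq> \<Union>(orbit_cell T g a n ` PiE {1..n} (\<lambda>_. C))"
proof
  fix x assume x: "x \<in> topspace T"
  have "\<exists>U\<in>C. nacomp g 0 (a i) x \<in> U" for i
  proof -
    have "nacomp g 0 (a i) x \<in> topspace T"
      using assms(1) x by (rule nacomp_in_topspace)
    then show ?thesis
      using assms(2) by blast
  qed
  then obtain U where U: "\<And>i. U i \<in> C \<and> nacomp g 0 (a i) x \<in> U i"
    by metis
  have "x \<in> orbit_cell T g a n U"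
    using x U unfolding orbit_cell_def by blast
  moreover have "restrict U {1..n} \<in> PiE {1..n} (\<lambda>_. C)"
    using U by simp
  ultimately show "x \<in> \<Union>(orbit_cell T g a n ` PiE {1..n} (\<lambda>_. C))"
    by (metis UnionI image_eqI orbit_cell_restrict)
qed

section \<open>Product systems and box covers\<close>

lemma nacomp_prod_maps:
  assumes "x \<in> extensional {..<k}"
  shows "nacomp (prod_maps k g) i m x = restrict (\<lambda>j. nacomp g i m (x j)) {..<k}"
proof (induction m)
  case 0
  then show ?case using assms by (simp add: extensional_restrict)
next
  case (Suc m)
  then show ?case by (auto simp: prod_maps_def fun_eq_iff)
qed

lemma prod_maps_topspace:
  assumes "\<And>m. g m ` topspace T \<subseteq> topspace T"
  shows "prod_maps k g m ` topspace (product_topology (\<lambda>_. T) {..<k})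
           \<subseteq> topspace (product_topology (\<lambda>_. T) {..<k})"
  using assms by (auto simp: prod_maps_def PiE_iff image_subset_iff)

lemma nacomp_prod_maps_in_PiE:
  assumes "x \<in> extensional {..<k}"
  shows "nacomp (prod_maps k g) 0 m x \<in> PiE {..<k} W \<longleftrightarrow> (\<forall>j\<in>{..<k}. nacomp g 0 m (x j) \<in> W j)"
  using assms by (simp add: nacomp_prod_maps restrict_PiE_iff Pi_iff)

lemma orbit_cell_product:
  "orbit_cell (product_topology (\<lambda>_. T) {..<k}) (prod_maps k g) a n (\<lambda>i. PiE {..<k} (V i))
     = PiE {..<k} (\<lambda>j. orbit_cell T g a n (\<lambda>i. V i j))"
proof (intro equalityI subsetI)
  fix x assume "x \<in> orbit_cell (product_topology (\<lambda>_. T) {..<k}) (prod_maps k g) a n (\<lambda>i. PiE {..<k} (V i))"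
  then have x: "x \<in> PiE {..<k} (\<lambda>_. topspace T)"
    and orbit: "\<forall>i\<in>{1..n}. nacomp (prod_maps k g) 0 (a i) x \<in> PiE {..<k} (V i)"
    by (simp_all add: orbit_cell_def)
  then have "\<forall>i\<in>{1..n}. \<forall>j\<in>{..<k}. nacomp g 0 (a i) (x j) \<in> V i j"
    using nacomp_prod_maps_in_PiE[of x k g] by (simp add: PiE_iff)
  then show "x \<in> PiE {..<k} (\<lambda>j. orbit_cell T g a n (\<lambda>i. V i j))"
    using x unfolding orbit_cell_def PiE_iff by blast
next
  fix x assume x: "x \<in> PiE {..<k} (\<lambda>j. orbit_cell T g a n (\<lambda>i. V i j))"
  then have "x \<in> extensional {..<k}" "\<forall>j\<in>{..<k}. x j \<in> topspace T"
    "\<forall>i\<in>{1..n}. \<forall>j\<in>{..<k}. nacomp g 0 (a i) (x j) \<in> V i j"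
    unfolding orbit_cell_def PiE_iff by blast+
  then show "x \<in> orbit_cell (product_topology (\<lambda>_. T) {..<k}) (prod_maps k g) a n (\<lambda>i. PiE {..<k} (V i))"
    unfolding orbit_cell_def using nacomp_prod_maps_in_PiE[of x k g] by (simp add: PiE_iff)
qed

definition box_cover :: "nat \<Rightarrow> 'a set set \<Rightarrow> (nat \<Rightarrow> 'a) set set" where
  "box_cover k C = (\<lambda>V. PiE {..<k} V) ` PiE {..<k} (\<lambda>_. C)"

lemma finite_box_cover: "finite C \<Longrightarrow> finite (box_cover k C)"
  unfolding box_cover_def by (simp add: finite_PiE)

lemma card_box_cover_le:
  assumes "finite C"
  shows "card (box_cover k C) \<le> card C ^ k"
proof -
  have "card (box_cover k C) \<le> card (PiE {..<k} (\<lambda>_. C))"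
    unfolding box_cover_def using assms by (intro card_image_le) (simp add: finite_PiE)
  also have "\<dots> = card C ^ k"
    by (simp add: card_PiE)
  finally show ?thesis .
qed

lemma box_cover_covers:
  assumes "topspace T \<subseteq> \<Union>C"
  shows "topspace (product_topology (\<lambda>_. T) {..<k}) \<subseteq> \<Union>(box_cover k C)"
proof
  fix x assume x: "x \<in> topspace (product_topology (\<lambda>_. T) {..<k})"
  then have "\<forall>j\<in>{..<k}. \<exists>U\<in>C. x j \<in> U"
    using assms by (fastforce simp: PiE_iff)
  then obtain V where V: "\<forall>j\<in>{..<k}. V j \<in> C \<and> x j \<in> V j"
    by metis
  then have "restrict V {..<k} \<in> PiE {..<k} (\<lambda>_. C)" "x \<in> PiE {..<k} (restrict V {..<k})"
    using x by (simp_all add: PiE_iff)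
  then show "x \<in> \<Union>(box_cover k C)"
    unfolding box_cover_def by blast
qed

lemma box_cover_finite_open_cover:
  assumes "C \<in> finite_open_covers T"
  shows "box_cover k C \<in> finite_open_covers (product_topology (\<lambda>_. T) {..<k})"
proof -
  have C: "finite C" "\<And>U. U \<in> C \<Longrightarrow> openin T U" "\<Union>C = topspace T"
    using assms by (auto simp: finite_open_covers_def)
  have "openin (product_topology (\<lambda>_. T) {..<k}) (PiE {..<k} V)" if "V \<in> PiE {..<k} (\<lambda>_. C)" for V
    using that C(2) by (auto simp: openin_PiE_gen PiE_iff)
  moreover have "PiE {..<k} V \<subseteq> PiE {..<k} (\<lambda>_. topspace T)" if "V \<in> PiE {..<k} (\<lambda>_. C)" for V
    using that C(3) by (intro PiE_mono) auto
  moreover have "topspace (product_topology (\<lambda>_. T) {..<k}) \<subseteq> \<Union>(box_cover k C)"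
    using C(3) by (intro box_cover_covers) simp
  ultimately show ?thesis
    using finite_box_cover[OF C(1)] unfolding finite_open_covers_def box_cover_def
    by auto
qed

lemma box_of_orbit_cells_refines:
  assumes refines: "\<And>V. (\<And>j. j < k \<Longrightarrow> V j \<in> C) \<Longrightarrow> \<exists>w\<in>W. PiE {..<k} V \<subseteq> w"
    and U: "\<And>j. j < k \<Longrightarrow> U j \<in> PiE {1..n} (\<lambda>_. C)"
  shows "\<exists>Q \<in> orbit_cell (product_topology (\<lambda>_. T) {..<k}) (prod_maps k g) a n ` PiE {1..n} (\<lambda>_. W).
           PiE {..<k} (\<lambda>j. orbit_cell T g a n (U j)) \<subseteq> Q"
proof -
  let ?P = "product_topology (\<lambda>_. T) {..<k}"
  have "U j i \<in> C" if "j < k" "i \<in> {1..n}" for i j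
    using PiE_mem[OF U[OF that(1)] that(2)] .
  then have "\<forall>i\<in>{1..n}. \<exists>w\<in>W. PiE {..<k} (\<lambda>j. U j i) \<subseteq> w"
    using refines by simp
  then obtain w where w: "\<And>i. i \<in> {1..n} \<Longrightarrow> w i \<in> W \<and> PiE {..<k} (\<lambda>j. U j i) \<subseteq> w i"
    by metis
  have "PiE {..<k} (\<lambda>j. orbit_cell T g a n (U j))
          = orbit_cell ?P (prod_maps k g) a n (\<lambda>i. PiE {..<k} (\<lambda>j. U j i))"
    by (rule orbit_cell_product[symmetric])
  also have "\<dots> \<subseteq> orbit_cell ?P (prod_maps k g) a n (restrict w {1..n})"
    using w by (intro orbit_cell_mono) simp
  finally have "PiE {..<k} (\<lambda>j. orbit_cell T g a n (U j)) \<subseteq> orbit_cell ?P (prod_maps k g) a n (restrict w {1..n})" .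
  moreover have "restrict w {1..n} \<in> PiE {1..n} (\<lambda>_. W)"
    using w by simp
  ultimately show ?thesis
    by blast
qed

lemma orbit_cell_of_box_cover:
  assumes "w \<in> PiE {1..n} (\<lambda>_. box_cover k C)"
  obtains V where "\<forall>i\<in>{1..n}. V i \<in> PiE {..<k} (\<lambda>_. C)"
    "orbit_cell (product_topology (\<lambda>_. T) {..<k}) (prod_maps k g) a n w
       = PiE {..<k} (\<lambda>j. orbit_cell T g a n (\<lambda>i. V i j))"
proof -
  have "\<forall>i\<in>{1..n}. \<exists>V\<in>PiE {..<k} (\<lambda>_. C). w i = PiE {..<k} V"
    using PiE_mem[OF assms] unfolding box_cover_def image_iff by blast
  then obtain V where V: "\<forall>i\<in>{1..n}. V i \<in> PiE {..<k} (\<lambda>_. C)"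
    and w_V: "\<And>i. i \<in> {1..n} \<Longrightarrow> w i = PiE {..<k} (V i)"
    by metis
  have "orbit_cell (product_topology (\<lambda>_. T) {..<k}) (prod_maps k g) a n w
          = orbit_cell (product_topology (\<lambda>_. T) {..<k}) (prod_maps k g) a n (\<lambda>i. PiE {..<k} (V i))"
    unfolding orbit_cell_def using w_V by simp
  also have "\<dots> = PiE {..<k} (\<lambda>j. orbit_cell T g a n (\<lambda>i. V i j))"
    by (rule orbit_cell_product)
  finally show ?thesis
    using V that by blast
qed

lemma orbit_cover_number_product_le:
  assumes maps: "\<And>m. g m ` topspace T \<subseteq> topspace T"
    and C: "finite C" "topspace T \<subseteq> \<Union>C"
    and refines: "\<And>V. (\<And>j. j < k \<Longrightarrow> V j \<in> C) \<Longrightarrow> \<exists>w\<in>W. PiE {..<k} V \<subseteq> w"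
  shows "orbit_cover_number (product_topology (\<lambda>_. T) {..<k}) (prod_maps k g) a W n
           \<le> orbit_cover_number T g a C n ^ k"
proof -
  have cells: "finite (orbit_cell T g a n ` PiE {1..n} (\<lambda>_. C))"
    using C(1) by (simp add: finite_PiE)
  obtain S where S: "S \<subseteq> orbit_cell T g a n ` PiE {1..n} (\<lambda>_. C)" "finite S"
      "card S = orbit_cover_number T g a C n" "topspace T \<subseteq> \<Union>S"
    unfolding orbit_cover_number_def
    by (rule obtain_min_subcover[OF subset_refl cells orbit_cells_cover[OF maps C(2)]])
  have "\<forall>P\<in>S. \<exists>U\<in>PiE {1..n} (\<lambda>_. C). orbit_cell T g a n U = P"
    using S(1) by blast
  then obtain U where U: "\<And>P. P \<in> S \<Longrightarrow> U P \<in> PiE {1..n} (\<lambda>_. C)"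
    and cell_U: "\<And>P. P \<in> S \<Longrightarrow> orbit_cell T g a n (U P) = P"
    by metis
  have "orbit_cover_number (product_topology (\<lambda>_. T) {..<k}) (prod_maps k g) a W n \<le> card (box_cover k S)"
    unfolding orbit_cover_number_def
  proof (rule min_subcover_le_refining)
    show "finite (box_cover k S)"
      using S(2) by (rule finite_box_cover)
    show "topspace (product_topology (\<lambda>_. T) {..<k}) \<subseteq> \<Union>(box_cover k S)"
      using S(4) by (rule box_cover_covers)
    fix B assume "B \<in> box_cover k S"
    then obtain \<sigma> where \<sigma>: "\<sigma> \<in> PiE {..<k} (\<lambda>_. S)" "B = PiE {..<k} \<sigma>"
      unfolding box_cover_def by blast
    have "B = PiE {..<k} (\<lambda>j. orbit_cell T g a n (U (\<sigma> j)))"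
      unfolding \<sigma>(2) using cell_U[OF PiE_mem[OF \<sigma>(1)]] by (intro PiE_cong) simp
    moreover have "\<exists>Q \<in> orbit_cell (product_topology (\<lambda>_. T) {..<k}) (prod_maps k g) a n ` PiE {1..n} (\<lambda>_. W).
                     PiE {..<k} (\<lambda>j. orbit_cell T g a n (U (\<sigma> j))) \<subseteq> Q"
    proof (rule box_of_orbit_cells_refines[OF refines])
      fix j assume "j < k"
      then show "U (\<sigma> j) \<in> PiE {1..n} (\<lambda>_. C)"
        using U[OF PiE_mem[OF \<sigma>(1)]] by simp
    qed
    ultimately show "\<exists>Q \<in> orbit_cell (product_topology (\<lambda>_. T) {..<k}) (prod_maps k g) a n ` PiE {1..n} (\<lambda>_. W).
                       B \<subseteq> Q"
      by simp
  qed
  also have "\<dots> \<le> card S ^ k"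
    using S(2) by (rule card_box_cover_le)
  finally show ?thesis
    using S(3) by simp
qed

section \<open>Separated and spanning sets\<close>

definition orbit_separated ::
  "'a::metric_space set \<Rightarrow> (nat \<Rightarrow> 'a \<Rightarrow> 'a) \<Rightarrow> (nat \<Rightarrow> nat) \<Rightarrow> nat \<Rightarrow> real \<Rightarrow> 'a set \<Rightarrow> bool" where
  "orbit_separated X f a n \<delta> E \<longleftrightarrow> E \<subseteq> X \<and> (\<forall>x\<in>E. \<forall>y\<in>E. x \<noteq> y \<longrightarrow>
      (\<exists>i\<in>{1..n}. \<delta> \<le> dist (nacomp f 0 (a i) x) (nacomp f 0 (a i) y)))"

lemma orbit_separated_insert:
  assumes "orbit_separated X f a n \<delta> E" "x \<in> X"
    and "\<And>e. e \<in> E \<Longrightarrow> \<exists>i\<in>{1..n}. \<delta> \<le> dist (nacomp f 0 (a i) e) (nacomp f 0 (a i) x)"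
  shows "orbit_separated X f a n \<delta> (insert x E)"
  using assms unfolding orbit_separated_def by (metis dist_commute insert_iff insert_subset)

lemma orbit_separated_cell_unique:
  assumes E: "orbit_separated X f a n \<delta> E"
    and small: "\<And>U x y. U \<in> C \<Longrightarrow> x \<in> U \<Longrightarrow> y \<in> U \<Longrightarrow> dist x y < \<delta>"
    and U: "\<And>i. i \<in> {1..n} \<Longrightarrow> U i \<in> C"
    and xy: "x \<in> E" "y \<in> E" "x \<in> orbit_cell (top_of_set X) f a n U" "y \<in> orbit_cell (top_of_set X) f a n U"
  shows "x = y"
proof (rule ccontr)
  assume "x \<noteq> y"
  then obtain i where i: "i \<in> {1..n}" "\<delta> \<le> dist (nacomp f 0 (a i) x) (nacomp f 0 (a i) y)"
    using E xy(1,2) unfolding orbit_separated_def by blast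
  have "nacomp f 0 (a i) x \<in> U i" "nacomp f 0 (a i) y \<in> U i"
    using xy(3,4) i(1) unfolding orbit_cell_def by blast+
  then have "dist (nacomp f 0 (a i) x) (nacomp f 0 (a i) y) < \<delta>"
    by (rule small[OF U[OF i(1)]])
  with i(2) show False
    by simp
qed

lemma card_orbit_separated_le:
  assumes maps: "\<And>m. f m ` X \<subseteq> X" and C: "C \<in> finite_open_covers (top_of_set X)"
    and small: "\<And>U x y. U \<in> C \<Longrightarrow> x \<in> U \<Longrightarrow> y \<in> U \<Longrightarrow> dist x y < \<delta>"
    and E: "orbit_separated X f a n \<delta> E"
  shows "card E \<le> orbit_cover_number (top_of_set X) f a C n"
  unfolding orbit_cover_number_def
proof (rule card_le_min_subcover[OF subset_refl])
  show "finite (orbit_cell (top_of_set X) f a n ` PiE {1..n} (\<lambda>_. C))"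
    using C by (simp add: finite_open_covers_def finite_PiE)
  show "topspace (top_of_set X) \<subseteq> \<Union>(orbit_cell (top_of_set X) f a n ` PiE {1..n} (\<lambda>_. C))"
    using C maps by (intro orbit_cells_cover) (auto simp: finite_open_covers_def)
  show "E \<subseteq> topspace (top_of_set X)"
    using E by (simp add: orbit_separated_def)
qed (use orbit_separated_cell_unique[OF E small] in fastforce)

lemma card_orbit_separated_power_le:
  assumes maps: "\<And>m. f m ` X \<subseteq> X" and C: "C \<in> finite_open_covers (top_of_set X)"
    and small: "\<And>U x y. U \<in> C \<Longrightarrow> x \<in> U \<Longrightarrow> y \<in> U \<Longrightarrow> dist x y < \<delta>"
    and E: "orbit_separated X f a n \<delta> E"
  shows "card E ^ k \<le> orbit_cover_number (product_topology (\<lambda>_. top_of_set X) {..<k})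
                         (prod_maps k f) a (box_cover k C) n"
proof -
  let ?P = "product_topology (\<lambda>_. top_of_set X) {..<k}"
  have "box_cover k C \<in> finite_open_covers ?P"
    using C by (rule box_cover_finite_open_cover)
  then have W: "finite (box_cover k C)" "topspace ?P \<subseteq> \<Union>(box_cover k C)"
    unfolding finite_open_covers_def by auto
  have maps': "prod_maps k f m ` topspace ?P \<subseteq> topspace ?P" for m
    using maps by (intro prod_maps_topspace) simp
  have "E \<subseteq> X"
    using E by (simp add: orbit_separated_def)
  have "card (PiE {..<k} (\<lambda>_. E)) \<le> orbit_cover_number ?P (prod_maps k f) a (box_cover k C) n"
    unfolding orbit_cover_number_def
  proof (rule card_le_min_subcover[OF subset_refl])
    show "finite (orbit_cell ?P (prod_maps k f) a n ` PiE {1..n} (\<lambda>_. box_cover k C))"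
      using W(1) by (simp add: finite_PiE)
    show "topspace ?P \<subseteq> \<Union>(orbit_cell ?P (prod_maps k f) a n ` PiE {1..n} (\<lambda>_. box_cover k C))"
      using maps' W(2) by (rule orbit_cells_cover)
    show "PiE {..<k} (\<lambda>_. E) \<subseteq> topspace ?P"
      using \<open>E \<subseteq> X\<close> by (simp add: PiE_mono)
    fix Q x y
    assume "Q \<in> orbit_cell ?P (prod_maps k f) a n ` PiE {1..n} (\<lambda>_. box_cover k C)"
      and xy: "x \<in> PiE {..<k} (\<lambda>_. E)" "y \<in> PiE {..<k} (\<lambda>_. E)" "x \<in> Q" "y \<in> Q"
    then obtain w where w: "w \<in> PiE {1..n} (\<lambda>_. box_cover k C)" "Q = orbit_cell ?P (prod_maps k f) a n w"
      by blast
    obtain V where V: "\<forall>i\<in>{1..n}. V i \<in> PiE {..<k} (\<lambda>_. C)"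
      and Q_eq: "Q = PiE {..<k} (\<lambda>j. orbit_cell (top_of_set X) f a n (\<lambda>i. V i j))"
      unfolding w(2) by (rule orbit_cell_of_box_cover[OF w(1)])
    have "x j = y j" if j: "j \<in> {..<k}" for j
    proof (rule orbit_separated_cell_unique[OF E small])
      show "V i j \<in> C" if "i \<in> {1..n}" for i
        using PiE_mem[OF bspec[OF V that] j] .
      show "x j \<in> E" "y j \<in> E"
        using PiE_mem[OF xy(1) j] PiE_mem[OF xy(2) j] by simp_all
      show "x j \<in> orbit_cell (top_of_set X) f a n (\<lambda>i. V i j)"
        "y j \<in> orbit_cell (top_of_set X) f a n (\<lambda>i. V i j)"
        using PiE_mem[OF xy(3)[unfolded Q_eq] j] PiE_mem[OF xy(4)[unfolded Q_eq] j] by simp_all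
    qed
    then show "x = y"
      using xy(1,2) by (intro PiE_ext) auto
  qed
  then show ?thesis
    by (simp add: card_PiE)
qed

lemma obtain_spanning_orbit_separated:
  assumes "0 < \<delta>" and bounded: "\<And>E. orbit_separated X f a n \<delta> E \<Longrightarrow> card E \<le> B"
  obtains E where "orbit_separated X f a n \<delta> E" "finite E"
    "\<And>x. x \<in> X \<Longrightarrow> \<exists>e\<in>E. \<forall>i\<in>{1..n}. dist (nacomp f 0 (a i) e) (nacomp f 0 (a i) x) < \<delta>"
proof -
  define sizes where "sizes = {card E | E. orbit_separated X f a n \<delta> E \<and> finite E}"
  have "0 \<in> sizes"
    unfolding sizes_def orbit_separated_def by (intro CollectI exI[of _ "{}"]) simp
  moreover have "\<forall>m\<in>sizes. m \<le> B"
    using bounded unfolding sizes_def by blast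
  ultimately obtain m where m: "m \<in> sizes" "\<And>m'. m' \<in> sizes \<Longrightarrow> m' \<le> m"
    using Nat.ex_has_greatest_nat[of "\<lambda>m. m \<in> sizes" 0 B] by blast
  then obtain E where E: "orbit_separated X f a n \<delta> E" "finite E" "card E = m"
    unfolding sizes_def by blast
  have "\<exists>e\<in>E. \<forall>i\<in>{1..n}. dist (nacomp f 0 (a i) e) (nacomp f 0 (a i) x) < \<delta>" if x: "x \<in> X" for x
  proof (rule ccontr)
    assume not_spanned: "\<not> ?thesis"
    then have "x \<notin> E"
      using \<open>0 < \<delta>\<close> by auto
    have "orbit_separated X f a n \<delta> (insert x E)"
    proof (rule orbit_separated_insert[OF E(1) x])
      fix e assume "e \<in> E"
      then show "\<exists>i\<in>{1..n}. \<delta> \<le> dist (nacomp f 0 (a i) e) (nacomp f 0 (a i) x)"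
        using not_spanned by (auto simp: not_less)
    qed
    then have "Suc m \<in> sizes"
      using E \<open>x \<notin> E\<close> unfolding sizes_def by (intro CollectI exI[of _ "insert x E"]) simp
    then show False
      using m(2)[of "Suc m"] by simp
  qed
  then show ?thesis
    using E(1,2) that by blast
qed

lemma orbit_cover_number_le_card_spanning:
  assumes maps: "\<And>m. f m ` X \<subseteq> X"
    and Lebesgue: "\<And>y. y \<in> X \<Longrightarrow> \<exists>U\<in>C. X \<inter> ball y \<delta> \<subseteq> U"
    and E: "E \<subseteq> X" "finite E"
    and spanning: "\<And>x. x \<in> X \<Longrightarrow> \<exists>e\<in>E. \<forall>i\<in>{1..n}. dist (nacomp f 0 (a i) e) (nacomp f 0 (a i) x) < \<delta>"
  shows "orbit_cover_number (top_of_set X) f a C n \<le> card E"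
proof -
  have orbit: "nacomp f 0 m x \<in> X" if "x \<in> X" for m x
    using nacomp_in_topspace[of f "top_of_set X"] maps that by simp
  obtain U where U: "\<And>y. y \<in> X \<Longrightarrow> U y \<in> C" "\<And>y. y \<in> X \<Longrightarrow> X \<inter> ball y \<delta> \<subseteq> U y"
    using Lebesgue by metis
  define V where "V e = restrict (\<lambda>i. U (nacomp f 0 (a i) e)) {1..n}" for e
  have V: "V e \<in> PiE {1..n} (\<lambda>_. C)" if "e \<in> E" for e
    unfolding V_def using U(1) orbit that E(1) by auto
  have "orbit_cover_number (top_of_set X) f a C n \<le> card ((\<lambda>e. orbit_cell (top_of_set X) f a n (V e)) ` E)"
    unfolding orbit_cover_number_def
  proof (rule min_subcover_le_card)
    show "(\<lambda>e. orbit_cell (top_of_set X) f a n (V e)) ` E \<subseteq> orbit_cell (top_of_set X) f a n ` PiE {1..n} (\<lambda>_. C)"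
      using V by blast
    show "topspace (top_of_set X) \<subseteq> \<Union>((\<lambda>e. orbit_cell (top_of_set X) f a n (V e)) ` E)"
    proof
      fix x assume "x \<in> topspace (top_of_set X)"
      then have x: "x \<in> X"
        by simp
      obtain e where e: "e \<in> E" "\<forall>i\<in>{1..n}. dist (nacomp f 0 (a i) e) (nacomp f 0 (a i) x) < \<delta>"
        using spanning[OF x] by blast
      have "nacomp f 0 (a i) x \<in> V e i" if i: "i \<in> {1..n}" for i
      proof -
        have "nacomp f 0 (a i) x \<in> X \<inter> ball (nacomp f 0 (a i) e) \<delta>"
          using orbit[OF x] e(2) i by simp
        then have "nacomp f 0 (a i) x \<in> U (nacomp f 0 (a i) e)"
          using U(2)[OF orbit] e(1) E(1) by blast
        then show ?thesis
          unfolding V_def using i by simp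
      qed
      then have "x \<in> orbit_cell (top_of_set X) f a n (V e)"
        unfolding orbit_cell_def using x by simp
      then show "x \<in> \<Union>((\<lambda>e. orbit_cell (top_of_set X) f a n (V e)) ` E)"
        using e(1) by blast
    qed
  qed (use E in simp)
  also have "\<dots> \<le> card E"
    using E(2) by (rule card_image_le)
  finally show ?thesis .
qed

section \<open>Lebesgue numbers and the two cover comparisons\<close>

lemma Lebesgue_number_top_of_set:
  assumes "compact X" "C \<in> finite_open_covers (top_of_set X)"
  obtains \<delta> :: real where "0 < \<delta>" "\<And>y. y \<in> X \<Longrightarrow> \<exists>U\<in>C. X \<inter> ball y \<delta> \<subseteq> U"
proof -
  let ?G = "{V. open V \<and> X \<inter> V \<in> C}"
  have "X \<subseteq> \<Union>?G"
  proof
    fix x assume "x \<in> X"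
    then obtain U where U: "U \<in> C" "x \<in> U"
      using assms(2) unfolding finite_open_covers_def by auto
    then obtain V where "open V" "U = X \<inter> V"
      using assms(2) unfolding finite_open_covers_def openin_open by blast
    with U show "x \<in> \<Union>?G"
      by blast
  qed
  moreover have "open V" if "V \<in> ?G" for V
    using that by blast
  ultimately obtain \<delta> where \<delta>: "0 < \<delta>" "\<And>y. y \<in> X \<Longrightarrow> \<exists>V\<in>?G. ball y \<delta> \<subseteq> V"
    by (rule Heine_Borel_lemma[OF assms(1)]) blast+
  show ?thesis
  proof (rule that[OF \<delta>(1)])
    fix y assume "y \<in> X"
    then obtain V where "V \<in> ?G" "ball y \<delta> \<subseteq> V"
      using \<delta>(2) by blast
    then show "\<exists>U\<in>C. X \<inter> ball y \<delta> \<subseteq> U"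
      by blast
  qed
qed

lemma obtain_small_open_cover:
  assumes "compact X" "0 < \<delta>"
  obtains C where "C \<in> finite_open_covers (top_of_set X)" "{} \<notin> C"
    "\<And>U x y. U \<in> C \<Longrightarrow> x \<in> U \<Longrightarrow> y \<in> U \<Longrightarrow> dist x y < \<delta>"
proof -
  have "X \<subseteq> (\<Union>c\<in>X. ball c (\<delta>/2))"
    using assms(2) by auto
  then obtain F where F: "F \<subseteq> X" "finite F" "X \<subseteq> (\<Union>c\<in>F. ball c (\<delta>/2))"
    by (rule compactE_image[OF assms(1), rotated]) (simp_all add: open_ball)
  let ?C = "(\<lambda>c. X \<inter> ball c (\<delta>/2)) ` F"
  have "?C \<in> finite_open_covers (top_of_set X)"
    using F unfolding finite_open_covers_def openin_open by auto
  moreover have "{} \<notin> ?C"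
    using F(1) assms(2) by auto
  moreover have "dist x y < \<delta>" if U: "U \<in> ?C" "x \<in> U" "y \<in> U" for U x y
  proof -
    obtain c where "U = X \<inter> ball c (\<delta>/2)"
      using U(1) by blast
    then have "dist c x < \<delta>/2" "dist c y < \<delta>/2"
      using U(2,3) by auto
    then show ?thesis
      by (rule dist_triangle_half_r)
  qed
  ultimately show ?thesis
    using that by blast
qed

lemma exists_box_cover_power_le:
  fixes X :: "'a::metric_space set"
  assumes "compact X" and maps: "\<And>m. f m ` X \<subseteq> X" and C: "C \<in> finite_open_covers (top_of_set X)"
  shows "\<exists>W \<in> finite_open_covers (product_topology (\<lambda>_. top_of_set X) {..<k}).
           \<forall>n. orbit_cover_number (top_of_set X) f a C n ^ k
                 \<le> orbit_cover_number (product_topology (\<lambda>_. top_of_set X) {..<k}) (prod_maps k f) a W n"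
proof -
  obtain \<delta> where \<delta>: "0 < \<delta>" "\<And>y. y \<in> X \<Longrightarrow> \<exists>U\<in>C. X \<inter> ball y \<delta> \<subseteq> U"
    using Lebesgue_number_top_of_set[OF assms(1) C] by blast
  obtain C' where C': "C' \<in> finite_open_covers (top_of_set X)"
    and small: "\<And>U x y. U \<in> C' \<Longrightarrow> x \<in> U \<Longrightarrow> y \<in> U \<Longrightarrow> dist x y < \<delta>"
    using obtain_small_open_cover[OF assms(1) \<delta>(1)] by metis
  have "orbit_cover_number (top_of_set X) f a C n ^ k
          \<le> orbit_cover_number (product_topology (\<lambda>_. top_of_set X) {..<k}) (prod_maps k f) a (box_cover k C') n"
    for n
  proof -
    have bound: "card E \<le> orbit_cover_number (top_of_set X) f a C' n"
      if "orbit_separated X f a n \<delta> E" for E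
      using maps C' small that by (rule card_orbit_separated_le)
    obtain E where E: "orbit_separated X f a n \<delta> E" "finite E"
      "\<And>x. x \<in> X \<Longrightarrow> \<exists>e\<in>E. \<forall>i\<in>{1..n}. dist (nacomp f 0 (a i) e) (nacomp f 0 (a i) x) < \<delta>"
      using obtain_spanning_orbit_separated[OF \<delta>(1) bound] by blast
    have "orbit_cover_number (top_of_set X) f a C n \<le> card E"
      using E by (intro orbit_cover_number_le_card_spanning[OF maps \<delta>(2)]) (auto simp: orbit_separated_def)
    then have "orbit_cover_number (top_of_set X) f a C n ^ k \<le> card E ^ k"
      by (rule power_mono) simp
    also have "\<dots> \<le> orbit_cover_number (product_topology (\<lambda>_. top_of_set X) {..<k}) (prod_maps k f) a (box_cover k C') n"
      using maps C' small E(1) by (rule card_orbit_separated_power_le)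
    finally show ?thesis .
  qed
  then show ?thesis
    using box_cover_finite_open_cover[OF C'] by blast
qed

lemma box_in_openin_product:
  assumes "finite I" "openin (product_topology (\<lambda>_. top_of_set X) I) w" "x \<in> w"
  obtains r :: real where "0 < r" "PiE I (\<lambda>j. X \<inter> ball (x j) r) \<subseteq> w"
proof -
  have "\<exists>U. finite {j \<in> I. U j \<noteq> topspace (top_of_set X)} \<and> (\<forall>j\<in>I. openin (top_of_set X) (U j))
          \<and> x \<in> PiE I U \<and> PiE I U \<subseteq> w"
    using assms(2,3) unfolding openin_product_topology_alt by (rule bspec)
  then obtain U where U: "\<forall>j\<in>I. openin (top_of_set X) (U j)" "x \<in> PiE I U" "PiE I U \<subseteq> w"
    by blast
  have "\<exists>r>0. X \<inter> ball (x j) r \<subseteq> U j" if j: "j \<in> I" for j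
  proof -
    obtain V where V: "open V" "U j = X \<inter> V"
      using U(1) j unfolding openin_open by blast
    have "x j \<in> V"
      using PiE_mem[OF U(2) j] V(2) by blast
    then obtain r where "0 < r" "ball (x j) r \<subseteq> V"
      using V(1) openE by blast
    then show ?thesis
      using V(2) by blast
  qed
  then obtain rr where rr: "\<And>j. j \<in> I \<Longrightarrow> 0 < rr j" "\<And>j. j \<in> I \<Longrightarrow> X \<inter> ball (x j) (rr j) \<subseteq> U j"
    by metis
  define r where "r = Min (insert 1 (rr ` I))"
  have "0 < r"
    unfolding r_def using assms(1) rr(1) by (simp add: Min_gr_iff)
  moreover have "PiE I (\<lambda>j. X \<inter> ball (x j) r) \<subseteq> PiE I U"
  proof (rule PiE_mono)
    fix j assume j: "j \<in> I"
    have "r \<le> rr j"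
      unfolding r_def using assms(1) j by (intro Min_le) simp_all
    then have "X \<inter> ball (x j) r \<subseteq> X \<inter> ball (x j) (rr j)"
      by (intro Int_mono subset_refl subset_ball)
    then show "X \<inter> ball (x j) r \<subseteq> U j"
      using rr(2)[OF j] by (rule order_trans)
  qed
  ultimately show ?thesis
    using that U(3) by blast
qed

lemma PiE_ball_subset_PiE_ball_add:
  assumes "y \<in> PiE I (\<lambda>j. X \<inter> ball (x j) r)"
  shows "PiE I (\<lambda>j. X \<inter> ball (y j) s) \<subseteq> PiE I (\<lambda>j. X \<inter> ball (x j) (r + s))"
proof (rule PiE_mono)
  fix j assume j: "j \<in> I"
  have "dist (x j) (y j) < r"
    using PiE_mem[OF assms j] by simp
  show "X \<inter> ball (y j) s \<subseteq> X \<inter> ball (x j) (r + s)"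
  proof
    fix z assume "z \<in> X \<inter> ball (y j) s"
    then show "z \<in> X \<inter> ball (x j) (r + s)"
      using \<open>dist (x j) (y j) < r\<close> dist_triangle[of "x j" z "y j"] by simp
  qed
qed

lemma finite_subcover_by_boxes:
  assumes "compact X" "finite I" "\<And>x. x \<in> PiE I (\<lambda>_. X) \<Longrightarrow> 0 < R x"
  obtains F where "F \<subseteq> PiE I (\<lambda>_. X)" "finite F"
    "PiE I (\<lambda>_. X) \<subseteq> (\<Union>x\<in>F. PiE I (\<lambda>j. X \<inter> ball (x j) (R x)))"
proof -
  let ?P = "product_topology (\<lambda>_. top_of_set X) I"
  let ?box = "\<lambda>x. PiE I (\<lambda>j. X \<inter> ball (x j) (R x))"
  have "compact_space ?P"
    unfolding compact_space_product_topology using assms(1) by (simp add: compact_space_subtopology)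
  then have "compactin ?P (topspace ?P)"
    unfolding compact_space_def .
  moreover have "openin ?P (?box x)" for x
    unfolding openin_PiE_gen using assms(2) by (simp add: openin_open_Int)
  moreover have "topspace ?P \<subseteq> (\<Union>x\<in>topspace ?P. ?box x)"
  proof
    fix x assume x: "x \<in> topspace ?P"
    then have "x \<in> ?box x"
      using assms(3)[of x] by (simp add: PiE_iff)
    with x show "x \<in> (\<Union>x\<in>topspace ?P. ?box x)"
      by blast
  qed
  ultimately obtain \<F> where \<F>: "finite \<F>" "\<F> \<subseteq> ?box ` topspace ?P" "topspace ?P \<subseteq> \<Union>\<F>"
    using compactinD[of ?P "topspace ?P" "?box ` topspace ?P"] by blast
  then obtain F where "F \<subseteq> topspace ?P" "finite F" "\<F> = ?box ` F"
    using finite_subset_image[OF \<F>(1,2)] by blast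
  with \<F>(3) show ?thesis
    using that by simp
qed

lemma product_Lebesgue_number:
  assumes "compact X" "finite I"
    and W: "\<And>w. w \<in> W \<Longrightarrow> openin (product_topology (\<lambda>_. top_of_set X) I) w"
      "topspace (product_topology (\<lambda>_. top_of_set X) I) \<subseteq> \<Union>W"
  obtains \<delta> :: real where "0 < \<delta>"
    "\<forall>y\<in>PiE I (\<lambda>_. X). \<exists>w\<in>W. PiE I (\<lambda>j. X \<inter> ball (y j) \<delta>) \<subseteq> w"
proof -
  define box where "box x r = PiE I (\<lambda>j. X \<inter> ball (x j) r)" for x and r :: real
  have "\<exists>r>0. \<exists>w\<in>W. box x (2 * r) \<subseteq> w" if x: "x \<in> PiE I (\<lambda>_. X)" for x
  proof -
    obtain w where w: "w \<in> W" "x \<in> w"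
      using W(2) x by auto
    obtain r where r: "0 < r" "box x r \<subseteq> w"
      unfolding box_def by (rule box_in_openin_product[OF assms(2) W(1)[OF w(1)] w(2)])
    have "0 < r / 2" "box x (2 * (r / 2)) \<subseteq> w"
      using r by simp_all
    then show ?thesis
      using w(1) by blast
  qed
  then obtain R where R: "\<And>x. x \<in> PiE I (\<lambda>_. X) \<Longrightarrow> 0 < R x"
    "\<And>x. x \<in> PiE I (\<lambda>_. X) \<Longrightarrow> \<exists>w\<in>W. box x (2 * R x) \<subseteq> w"
    by metis
  obtain F where F: "F \<subseteq> PiE I (\<lambda>_. X)" "finite F" "PiE I (\<lambda>_. X) \<subseteq> (\<Union>x\<in>F. box x (R x))"
    unfolding box_def by (rule finite_subcover_by_boxes[OF assms(1,2) R(1)])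
  define \<delta> where "\<delta> = Min (insert 1 (R ` F))"
  have "\<forall>x\<in>F. 0 < R x"
    using F(1) R(1) by blast
  then have "0 < \<delta>"
    unfolding \<delta>_def using F(2) by (simp add: Min_gr_iff)
  have boxes: "\<exists>w\<in>W. box y \<delta> \<subseteq> w" if y: "y \<in> PiE I (\<lambda>_. X)" for y
  proof -
    obtain x where x: "x \<in> F" "y \<in> box x (R x)"
      using F(3) y by blast
    have "\<delta> \<le> R x"
      unfolding \<delta>_def using F(2) x(1) by (intro Min_le) simp_all
    have "box y \<delta> \<subseteq> box x (R x + \<delta>)"
      using x(2) unfolding box_def by (rule PiE_ball_subset_PiE_ball_add)
    also have "\<dots> \<subseteq> box x (2 * R x)"
      unfolding box_def using \<open>\<delta> \<le> R x\<close> by (intro PiE_mono Int_mono subset_refl subset_ball) simp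
    finally have "box y \<delta> \<subseteq> box x (2 * R x)" .
    moreover obtain w where "w \<in> W" "box x (2 * R x) \<subseteq> w"
      using R(2) x(1) F(1) by blast
    ultimately show ?thesis
      by blast
  qed
  show ?thesis
  proof (rule that)
    show "0 < \<delta>"
      by fact
    show "\<forall>y\<in>PiE I (\<lambda>_. X). \<exists>w\<in>W. PiE I (\<lambda>j. X \<inter> ball (y j) \<delta>) \<subseteq> w"
      using boxes unfolding box_def by (rule ballI)
  qed
qed

lemma exists_cover_refining_boxes:
  fixes X :: "'a::metric_space set" and k :: nat
  assumes "compact X" and W: "W \<in> finite_open_covers (product_topology (\<lambda>_. top_of_set X) {..<k})"
  obtains C where "C \<in> finite_open_covers (top_of_set X)"
    "\<And>V. (\<And>j. j < k \<Longrightarrow> V j \<in> C) \<Longrightarrow> \<exists>w\<in>W. PiE {..<k} V \<subseteq> w"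
proof -
  let ?P = "product_topology (\<lambda>_. top_of_set X) {..<k}"
  have open_W: "\<And>w. w \<in> W \<Longrightarrow> openin ?P w" and cover_W: "topspace ?P \<subseteq> \<Union>W"
    using W unfolding finite_open_covers_def by auto
  obtain \<delta> where \<delta>: "0 < \<delta>"
    "\<forall>y\<in>PiE {..<k} (\<lambda>_. X). \<exists>w\<in>W. PiE {..<k} (\<lambda>j. X \<inter> ball (y j) \<delta>) \<subseteq> w"
    by (rule product_Lebesgue_number[OF assms(1) finite_lessThan open_W cover_W])
  obtain C where C: "C \<in> finite_open_covers (top_of_set X)" "{} \<notin> C"
    and small: "\<And>U x y. U \<in> C \<Longrightarrow> x \<in> U \<Longrightarrow> y \<in> U \<Longrightarrow> dist x y < \<delta>"
    using obtain_small_open_cover[OF assms(1) \<delta>(1)] by metis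
  have "\<Union>C = X"
    using C(1) unfolding finite_open_covers_def by simp
  then have CX: "U \<subseteq> X" if "U \<in> C" for U
    using that by blast
  have "\<exists>w\<in>W. PiE {..<k} V \<subseteq> w" if V: "\<And>j. j < k \<Longrightarrow> V j \<in> C" for V
  proof -
    have "V j \<noteq> {}" if "j \<in> {..<k}" for j
      using V[of j] C(2) that by auto
    then have "PiE {..<k} V \<noteq> {}"
      unfolding PiE_eq_empty_iff by blast
    then obtain y where y: "y \<in> PiE {..<k} V"
      by blast
    have "y \<in> PiE {..<k} (\<lambda>_. X)"
      using y V CX by (auto simp: PiE_iff)
    then have "\<exists>w\<in>W. PiE {..<k} (\<lambda>j. X \<inter> ball (y j) \<delta>) \<subseteq> w"
      by (rule bspec[OF \<delta>(2)])
    then obtain w where w: "w \<in> W" "PiE {..<k} (\<lambda>j. X \<inter> ball (y j) \<delta>) \<subseteq> w"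
      by (rule bexE)
    have "PiE {..<k} V \<subseteq> PiE {..<k} (\<lambda>j. X \<inter> ball (y j) \<delta>)"
    proof (rule PiE_mono)
      fix j assume j: "j \<in> {..<k}"
      then have "V j \<in> C" "y j \<in> V j"
        using V PiE_mem[OF y j] by simp_all
      then show "V j \<subseteq> X \<inter> ball (y j) \<delta>"
        using small CX by fastforce
    qed
    then have "PiE {..<k} V \<subseteq> w"
      using w(2) by (rule order_trans)
    with w(1) show ?thesis
      by (rule bexI[rotated])
  qed
  with C(1) show ?thesis
    by (rule that)
qed

lemma exists_cover_power_ge:
  fixes X :: "'a::metric_space set"
  assumes "compact X" and maps: "\<And>m. f m ` X \<subseteq> X"
    and W: "W \<in> finite_open_covers (product_topology (\<lambda>_. top_of_set X) {..<k})"
  shows "\<exists>C \<in> finite_open_covers (top_of_set X).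
           \<forall>n. orbit_cover_number (product_topology (\<lambda>_. top_of_set X) {..<k}) (prod_maps k f) a W n
                 \<le> orbit_cover_number (top_of_set X) f a C n ^ k"
proof -
  obtain C where C: "C \<in> finite_open_covers (top_of_set X)"
    and refines: "\<And>V. (\<And>j. j < k \<Longrightarrow> V j \<in> C) \<Longrightarrow> \<exists>w\<in>W. PiE {..<k} V \<subseteq> w"
    using exists_cover_refining_boxes[OF assms(1) W] by blast
  have "finite C" "topspace (top_of_set X) \<subseteq> \<Union>C"
    using C unfolding finite_open_covers_def by auto
  moreover have "f m ` topspace (top_of_set X) \<subseteq> topspace (top_of_set X)" for m
    using maps by simp
  ultimately show ?thesis
    using orbit_cover_number_product_le[OF _ _ _ refines] C by blast
qed

lemma ln_of_nat_nonneg: "0 \<le> ln (real (q::nat))"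
  by (cases "q = 0") auto

lemma ln_le_mult_ln_of_le_power:
  fixes p q k :: nat
  assumes "q \<le> p ^ k"
  shows "ln (real q) \<le> real k * ln (real p)"
proof (cases "q = 0")
  case True
  then show ?thesis
    using ln_of_nat_nonneg[of p] by simp
next
  case False
  then have "ln (real q) \<le> ln (real p ^ k)"
    using assms by (intro ln_mono) (simp_all flip: of_nat_power)
  then show ?thesis
    by (simp add: ln_realpow)
qed

lemma mult_ln_le_ln_of_power_le:
  fixes p q k :: nat
  assumes "p ^ k \<le> q"
  shows "real k * ln (real p) \<le> ln (real q)"
proof (cases "p ^ k = 0")
  case True
  then show ?thesis
    using ln_of_nat_nonneg[of q] by simp
next
  case False
  then have "ln (real p ^ k) \<le> ln (real q)"
    using assms by (intro ln_mono) (simp_all flip: of_nat_power)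
  then show ?thesis
    by (simp add: ln_realpow)
qed

lemma limsup_ln_ratio_le_mult:
  fixes p q :: "nat \<Rightarrow> nat"
  assumes "\<And>n. q n \<le> p n ^ k"
  shows "limsup (\<lambda>n. ereal (ln (real (q n)) / real n))
           \<le> ereal (real k) * limsup (\<lambda>n. ereal (ln (real (p n)) / real n))"
proof -
  have "limsup (\<lambda>n. ereal (ln (real (q n)) / real n))
          \<le> limsup (\<lambda>n. ereal (real k) * ereal (ln (real (p n)) / real n))"
    using ln_le_mult_ln_of_le_power[OF assms]
    by (intro Limsup_mono always_eventually allI) (simp add: divide_right_mono)
  also have "\<dots> = ereal (real k) * limsup (\<lambda>n. ereal (ln (real (p n)) / real n))"
    by (rule Limsup_ereal_mult_left) simp_all
  finally show ?thesis .
qed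

lemma mult_limsup_ln_ratio_le:
  fixes p q :: "nat \<Rightarrow> nat"
  assumes "\<And>n. p n ^ k \<le> q n"
  shows "ereal (real k) * limsup (\<lambda>n. ereal (ln (real (p n)) / real n))
           \<le> limsup (\<lambda>n. ereal (ln (real (q n)) / real n))"
proof -
  have "ereal (real k) * limsup (\<lambda>n. ereal (ln (real (p n)) / real n))
          = limsup (\<lambda>n. ereal (real k) * ereal (ln (real (p n)) / real n))"
    by (rule Limsup_ereal_mult_left[symmetric]) simp_all
  also have "\<dots> \<le> limsup (\<lambda>n. ereal (ln (real (q n)) / real n))"
    using mult_ln_le_ln_of_power_le[OF assms]
    by (intro Limsup_mono always_eventually allI) (simp add: divide_right_mono)
  finally show ?thesis .
qed

lemma seq_entropy_le_mult:
  assumes "\<And>W. W \<in> finite_open_covers T' \<Longrightarrow> \<exists>C \<in> finite_open_covers T.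
             \<forall>n. orbit_cover_number T' g' a W n \<le> orbit_cover_number T g a C n ^ k"
  shows "seq_entropy T' g' a \<le> ereal (real k) * seq_entropy T g a"
  unfolding seq_entropy_orbit_cover_number
proof (rule SUP_least)
  fix W assume "W \<in> finite_open_covers T'"
  then obtain C where C: "C \<in> finite_open_covers T"
    "\<And>n. orbit_cover_number T' g' a W n \<le> orbit_cover_number T g a C n ^ k"
    using assms by blast
  have "limsup (\<lambda>n. ereal (ln (real (orbit_cover_number T' g' a W n)) / real n))
          \<le> ereal (real k) * limsup (\<lambda>n. ereal (ln (real (orbit_cover_number T g a C n)) / real n))"
    using C(2) by (rule limsup_ln_ratio_le_mult)
  also have "\<dots> \<le> ereal (real k) * (SUP C \<in> finite_open_covers T.
                   limsup (\<lambda>n. ereal (ln (real (orbit_cover_number T g a C n)) / real n)))"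
    using C(1) by (intro ereal_mult_left_mono SUP_upper) simp_all
  finally show "limsup (\<lambda>n. ereal (ln (real (orbit_cover_number T' g' a W n)) / real n))
          \<le> ereal (real k) * (SUP C \<in> finite_open_covers T.
                   limsup (\<lambda>n. ereal (ln (real (orbit_cover_number T g a C n)) / real n)))" .
qed

lemma mult_seq_entropy_le:
  assumes "\<And>C. C \<in> finite_open_covers T \<Longrightarrow> \<exists>W \<in> finite_open_covers T'.
             \<forall>n. orbit_cover_number T g a C n ^ k \<le> orbit_cover_number T' g' a W n"
  shows "ereal (real k) * seq_entropy T g a \<le> seq_entropy T' g' a"
proof -
  let ?h = "\<lambda>T g C. limsup (\<lambda>n. ereal (ln (real (orbit_cover_number T g a C n)) / real n))"
  have "{topspace T} \<in> finite_open_covers T"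
    by (simp add: finite_open_covers_def)
  moreover have "0 \<le> ?h T g C" for C
    by (rule le_Limsup) (simp_all add: ln_of_nat_nonneg)
  ultimately have "ereal (real k) * seq_entropy T g a
                     = (SUP C \<in> finite_open_covers T. ereal (real k) * ?h T g C)"
    unfolding seq_entropy_orbit_cover_number by (subst SUP_ereal_mult_left) auto
  also have "\<dots> \<le> seq_entropy T' g' a"
    unfolding seq_entropy_orbit_cover_number
  proof (rule SUP_least)
    fix C assume "C \<in> finite_open_covers T"
    then obtain W where W: "W \<in> finite_open_covers T'"
      "\<And>n. orbit_cover_number T g a C n ^ k \<le> orbit_cover_number T' g' a W n"
      using assms by blast
    have "ereal (real k) * ?h T g C \<le> ?h T' g' W"
      using W(2) by (rule mult_limsup_ln_ratio_le)
    also have "\<dots> \<le> (SUP W \<in> finite_open_covers T'. ?h T' g' W)"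
      using W(1) by (rule SUP_upper)
    finally show "ereal (real k) * ?h T g C \<le> (SUP W \<in> finite_open_covers T'. ?h T' g' W)" .
  qed
  finally show ?thesis .
qed

theorem lemma3p5:
  fixes X :: "'a::metric_space set"
    and f :: "nat \<Rightarrow> 'a \<Rightarrow> 'a"
    and a :: "nat \<Rightarrow> nat"
    and k :: nat
  assumes "compact X"
    and "\<And>n. continuous_on X (f n)"
    and "\<And>n. f n ` X \<subseteq> X"
    and "strict_mono_on {1..} a"
    and "k \<ge> 1"
  shows "seq_entropy (product_topology (\<lambda>i. top_of_set X) {..<k}) (prod_maps k f) a
         = ereal (real k) * seq_entropy (top_of_set X) f a"
proof (rule antisym)
  show "seq_entropy (product_topology (\<lambda>i. top_of_set X) {..<k}) (prod_maps k f) a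
          \<le> ereal (real k) * seq_entropy (top_of_set X) f a"
    by (rule seq_entropy_le_mult) (rule exists_cover_power_ge[OF assms(1,3)])
  show "ereal (real k) * seq_entropy (top_of_set X) f a
          \<le> seq_entropy (product_topology (\<lambda>i. top_of_set X) {..<k}) (prod_maps k f) a"
    by (rule mult_seq_entropy_le) (rule exists_box_cover_power_le[OF assms(1,3)])
qed

end
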